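(* Let $n \geq 2$. The set of strongly doubly reversible pairs in $\mathrm{SU}(n,1)$ has Haar measure zero in $\mathrm{SU}(n,1)\times \mathrm{SU}(n,1)$.
   Context: $\mathrm{SU}(n,1)$ is the group of determinant-one complex $(n+1)\times(n+1)$ matrices preserving a Hermitian form of signature $(n,1)$. For a group $G$, a pair $(g_1,g_2)\in G\times G$ is strongly doubly reversible if there is $g\in G$ with $g^2=1$ such that $g g_1 g^{-1}=g_1^{-1}$ and $g g_2 g^{-1}=g_2^{-1}$. *)

theory Defs
  imports "HOL-Analysis.Analysis"
begin

text \<open>Complex (n+1)x(n+1) matrices are indexed by the type 'm option, where
  CARD('m) = n; the index None carries the negative direction of the form.\<close>

definition conj_transpose :: "complex^'k::finite^'k \<Rightarrow> complex^'k^'k" where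
  "conj_transpose A = (\<chi> i j. cnj (A $ j $ i))"

definition form_J :: "complex^('m::finite option)^('m::finite option)" where
  "form_J = (\<chi> i j. if i = j then (if i = None then -1 else 1) else 0)"

definition SU_n1 :: "(complex^('m::finite option)^('m::finite option)) set" where
  "SU_n1 = {A. conj_transpose A ** form_J ** A = form_J \<and> det A = 1}"

definition strongly_doubly_reversible ::
  "('a::semiring_1^'k::finite^'k) set \<Rightarrow> 'a^'k^'k \<Rightarrow> 'a^'k^'k \<Rightarrow> bool" where
  "strongly_doubly_reversible G g1 g2 \<longleftrightarrow>
     (\<exists>g\<in>G. g ** g = mat 1 \<and>
        g ** g1 ** matrix_inv g = matrix_inv g1 \<and>
        g ** g2 ** matrix_inv g = matrix_inv g2)"

text \<open>A (left) Haar measure of a locally compact group H (a subset of a Euclidean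
  space, with multiplication mul), realised as a Borel measure on the ambient space
  concentrated on H: nonzero, finite on compact sets, left-invariant.\<close>
definition haar_measure ::
  "('a::euclidean_space \<Rightarrow> 'a \<Rightarrow> 'a) \<Rightarrow> 'a set \<Rightarrow> 'a measure \<Rightarrow> bool" where
  "haar_measure mul H \<mu> \<longleftrightarrow>
     sets \<mu> = sets borel \<and>
     emeasure \<mu> (UNIV - H) = 0 \<and>
     emeasure \<mu> H \<noteq> 0 \<and>
     (\<forall>K. compact K \<longrightarrow> emeasure \<mu> K < \<infinity>) \<and>
     (\<forall>g\<in>H. \<forall>A\<in>sets borel. A \<subseteq> H \<longrightarrow>
        emeasure \<mu> (mul g ` A) = emeasure \<mu> A)"

definition haar_null :: "'a measure \<Rightarrow> 'a set \<Rightarrow> bool" where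
  "haar_null \<mu> S \<longleftrightarrow> (\<exists>N\<in>sets \<mu>. S \<subseteq> N \<and> emeasure \<mu> N = 0)"

definition pair_mult :: "('a::semiring_1^'k::finite^'k) \<times> ('a^'k^'k) \<Rightarrow> ('a^'k^'k) \<times> ('a^'k^'k)
    \<Rightarrow> ('a^'k^'k) \<times> ('a^'k^'k)" where
  "pair_mult p q = (fst p ** fst q, snd p ** snd q)"

end

(* If an involution g conjugates g1 to its inverse, then
   tr g1 = tr g1^-1 = cnj (tr g1), the latter because g1^-1 = J g1^* J in SU(n,1);
   so the strongly doubly reversible pairs lie in the closed set Q of pairs whose
   first entry has real trace.  Q is null: left-translate a compact piece B of Q by
   the diagonal elements diag(cnj w^2, w, w, 1, ..., 1) of SU(n,1), |w| = 1.  The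
   translates have the measure of B and stay in a fixed ball, but a point lies in
   at most four of them, because the real-trace condition becomes a quartic
   equation in w whose constant term is the (0,0) entry, never zero in SU(n,1).
   Infinitely many subsets of a set of finite measure with equal measure and
   bounded overlap must all be null. *)

theory Submission
  imports Defs "HOL-Computational_Algebra.Polynomial"
begin

lemma matrix_inv_left:
  fixes A :: "'a::semiring_1^'n^'m"
  assumes "invertible A"
  shows "matrix_inv A ** A = mat 1"
  using someI_ex[OF assms[unfolded invertible_def]] unfolding matrix_inv_def by blast

lemma matrix_inv_eqI:
  fixes A B :: "'a::field^'n^'n"
  assumes "A ** B = mat 1"
  shows "matrix_inv A = B"
proof -
  have "invertible A"
    using assms matrix_left_right_inverse invertible_def by blast
  have "matrix_inv A = matrix_inv A ** (A ** B)"
    by (simp add: assms)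
  also have "\<dots> = B"
    by (simp add: matrix_mul_assoc matrix_inv_left[OF \<open>invertible A\<close>])
  finally show ?thesis .
qed

lemma trace_similar:
  fixes A g :: "'a::comm_semiring_1^'n^'n"
  assumes "invertible g"
  shows "trace (g ** A ** matrix_inv g) = trace A"
proof -
  have "trace (g ** A ** matrix_inv g) = trace (A ** matrix_inv g ** g)"
    by (metis trace_mul_sym matrix_mul_assoc)
  also have "\<dots> = trace A"
    by (metis matrix_mul_assoc matrix_mul_rid matrix_inv_left[OF assms])
  finally show ?thesis .
qed

lemma trace_conj_transpose: "trace (conj_transpose A) = cnj (trace A)"
  by (simp add: trace_def conj_transpose_def)

definition diagonal_matrix :: "('n::finite \<Rightarrow> 'a::zero) \<Rightarrow> 'a^'n^'n" where
  "diagonal_matrix f = (\<chi> i j. if i = j then f i else 0)"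

lemma diagonal_matrix_mult_nth:
  "(diagonal_matrix f ** Y) $ i $ j = f i * Y $ i $ j"
proof -
  have "(\<Sum>k\<in>UNIV. (if i = k then f i else 0) * Y $ k $ j) = f i * Y $ i $ j"
    by (simp add: if_distrib[where f = "\<lambda>x. x * _"] cong: if_cong)
  then show ?thesis
    by (simp add: diagonal_matrix_def matrix_matrix_mult_def)
qed

lemma matrix_mult_diagonal_matrix_nth:
  "(Y ** diagonal_matrix f) $ i $ j = Y $ i $ j * f j"
proof -
  have "(\<Sum>k\<in>UNIV. Y $ i $ k * (if k = j then f k else 0)) = Y $ i $ j * f j"
    by (simp add: if_distrib[where f = "\<lambda>x. _ * x"] cong: if_cong)
  then show ?thesis
    by (simp add: diagonal_matrix_def matrix_matrix_mult_def)
qed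

lemma diagonal_matrix_mult:
  "diagonal_matrix f ** diagonal_matrix g = diagonal_matrix (\<lambda>i. f i * g i)"
  by (simp add: vec_eq_iff diagonal_matrix_mult_nth) (simp add: diagonal_matrix_def)

lemma mat_1_eq_diagonal_matrix: "mat 1 = diagonal_matrix (\<lambda>_. 1)"
  by (simp add: vec_eq_iff mat_def diagonal_matrix_def)

lemma conj_transpose_diagonal_matrix:
  "conj_transpose (diagonal_matrix f) = diagonal_matrix (\<lambda>i. cnj (f i))"
  by (simp add: vec_eq_iff conj_transpose_def diagonal_matrix_def)

lemma det_diagonal_matrix:
  "det (diagonal_matrix f :: 'a::comm_ring_1^'n^'n) = prod f UNIV"
  by (subst det_diagonal) (simp_all add: diagonal_matrix_def)

lemma norm_diagonal_matrix_mult: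
  fixes f :: "'n::finite \<Rightarrow> 'a::real_normed_field"
  assumes "\<And>i. norm (f i) = 1"
  shows "norm (diagonal_matrix f ** Y) = norm Y"
  by (simp add: norm_vec_def diagonal_matrix_mult_nth norm_mult assms)

lemma form_J_eq_diagonal_matrix:
  "form_J = diagonal_matrix (\<lambda>i. if i = None then -1 else 1)"
  by (simp add: vec_eq_iff form_J_def diagonal_matrix_def)

lemma form_J_mult_form_J: "form_J ** form_J = mat 1"
  by (simp add: form_J_eq_diagonal_matrix diagonal_matrix_mult mat_1_eq_diagonal_matrix
      if_distrib[where f = "\<lambda>x. x * _"] cong: if_cong)

lemma diagonal_matrix_in_SU_n1:
  fixes f :: "'m::finite option \<Rightarrow> complex"
  assumes "\<And>i. cmod (f i) = 1" and "prod f UNIV = 1"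
  shows "diagonal_matrix f \<in> SU_n1"
proof -
  have "(\<lambda>i. cnj (f i) * s i * f i) = s" for s
  proof
    fix i
    have "cnj (f i) * f i = 1"
      using complex_norm_square[of "f i"] assms(1)[of i] by (simp add: mult.commute)
    then show "cnj (f i) * s i * f i = s i"
      by (metis mult.commute mult.left_commute mult_1_right)
  qed
  then have "conj_transpose (diagonal_matrix f) ** form_J ** diagonal_matrix f = form_J"
    by (simp only: form_J_eq_diagonal_matrix conj_transpose_diagonal_matrix diagonal_matrix_mult)
  then show ?thesis
    by (simp add: SU_n1_def det_diagonal_matrix assms(2))
qed

lemma mat_1_in_SU_n1: "mat 1 \<in> SU_n1"
  by (simp add: mat_1_eq_diagonal_matrix diagonal_matrix_in_SU_n1)

lemma closed_SU_n1: "closed SU_n1"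
  unfolding SU_n1_def Collect_conj_eq conj_transpose_def matrix_matrix_mult_def det_def
  by (intro closed_Int closed_Collect_eq continuous_intros)

lemma SU_n1_nth_None_None_nonzero:
  assumes "A \<in> SU_n1"
  shows "A $ None $ None \<noteq> 0"
proof
  assume corner: "A $ None $ None = 0"
  define s :: "'a option \<Rightarrow> complex" where "s i = (if i = None then -1 else 1)" for i
  have "-1 = (conj_transpose A ** form_J ** A) $ None $ None"
    using assms by (simp add: SU_n1_def form_J_def)
  also have "\<dots> = (\<Sum>k\<in>UNIV. cnj (A $ k $ None) * s k * A $ k $ None)"
    by (simp add: form_J_eq_diagonal_matrix matrix_mult_diagonal_matrix_nth s_def
        matrix_matrix_mult_def[of _ A] conj_transpose_def)
  finally have sum_eq: "(\<Sum>k\<in>UNIV. cnj (A $ k $ None) * s k * A $ k $ None) = -1"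
    by (rule sym)
  have "(\<Sum>k\<in>UNIV. Re (cnj (A $ k $ None) * s k * A $ k $ None))
      = Re (\<Sum>k\<in>UNIV. cnj (A $ k $ None) * s k * A $ k $ None)"
    by (rule Re_sum[symmetric])
  also have "\<dots> = -1"
    unfolding sum_eq by simp
  finally have "(\<Sum>k\<in>UNIV. Re (cnj (A $ k $ None) * s k * A $ k $ None)) = -1" .
  moreover have "0 \<le> Re (cnj (A $ k $ None) * s k * A $ k $ None)" for k
  proof (cases "k = None")
    case False
    then have "s k = 1"
      by (simp add: s_def)
    then have "cnj (A $ k $ None) * s k * A $ k $ None = A $ k $ None * cnj (A $ k $ None)"
      by simp
    then show ?thesis
      by (simp add: complex_mult_cnj)
  qed (simp add: corner)
  ultimately show False
    using sum_nonneg[of UNIV "\<lambda>k. Re (cnj (A $ k $ None) * s k * A $ k $ None)"] by simp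
qed

lemma matrix_inv_SU_n1:
  assumes "A \<in> SU_n1"
  shows "matrix_inv A = form_J ** conj_transpose A ** form_J"
proof (rule matrix_inv_eqI[OF matrix_left_right_inverse[THEN iffD1]])
  have "conj_transpose A ** form_J ** A = form_J"
    using assms by (simp add: SU_n1_def)
  then show "form_J ** conj_transpose A ** form_J ** A = mat 1"
    by (metis form_J_mult_form_J matrix_mul_assoc)
qed

lemma trace_matrix_inv_SU_n1:
  assumes "A \<in> SU_n1"
  shows "trace (matrix_inv A) = cnj (trace A)"
proof -
  have "trace (matrix_inv A) = trace (conj_transpose A ** form_J ** form_J)"
    using matrix_inv_SU_n1[OF assms] by (metis trace_mul_sym matrix_mul_assoc)
  then show ?thesis
    by (simp add: matrix_mul_assoc[symmetric] form_J_mult_form_J trace_conj_transpose)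
qed

lemma trace_real_if_reversible_SU_n1:
  assumes "A \<in> SU_n1" and "invertible g" and "g ** A ** matrix_inv g = matrix_inv A"
  shows "Im (trace A) = 0"
proof -
  have "cnj (trace A) = trace A"
    using trace_similar[OF assms(2), of A] assms(3) trace_matrix_inv_SU_n1[OF assms(1)] by simp
  then show ?thesis
    by (metis complex_is_Real_iff Reals_cnj_iff)
qed

lemma strongly_doubly_reversible_trace_real:
  assumes "g1 \<in> SU_n1" and "strongly_doubly_reversible SU_n1 g1 g2"
  shows "Im (trace g1) = 0"
proof -
  obtain g where "g ** g = mat 1" and "g ** g1 ** matrix_inv g = matrix_inv g1"
    using assms(2) unfolding strongly_doubly_reversible_def by blast
  moreover have "invertible g"
    using \<open>g ** g = mat 1\<close> unfolding invertible_def by blast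
  ultimately show ?thesis
    using trace_real_if_reversible_SU_n1 assms(1) by blast
qed

text \<open>Two positions \<open>s1 \<noteq> s2\<close> are needed, which is where \<open>n \<ge> 2\<close> enters:
  in \<open>SU(1,1)\<close> every trace is real.\<close>

definition twist :: "'m \<Rightarrow> 'm \<Rightarrow> complex \<Rightarrow> 'm option \<Rightarrow> complex" where
  "twist s1 s2 w i = (if i = None then cnj w ^ 2 else if i = Some s1 \<or> i = Some s2 then w else 1)"

lemma norm_twist: "cmod w = 1 \<Longrightarrow> cmod (twist s1 s2 w i) = 1"
  by (simp add: twist_def norm_power)

lemma prod_twist:
  fixes s1 s2 :: "'m::finite"
  assumes "s1 \<noteq> s2" and "cmod w = 1"
  shows "prod (twist s1 s2 w) UNIV = 1"
proof -
  have "prod (twist s1 s2 w) UNIV = prod (twist s1 s2 w) {None, Some s1, Some s2}"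
    by (rule prod.mono_neutral_right) (auto simp: twist_def)
  also have "\<dots> = (cnj w * w)\<^sup>2"
    using assms(1) by (simp add: twist_def power2_eq_square)
  also have "cnj w * w = 1"
    using assms(2) complex_norm_square[of w] by (simp add: mult.commute)
  finally show ?thesis by simp
qed

lemma twist_in_SU_n1:
  "s1 \<noteq> s2 \<Longrightarrow> cmod w = 1 \<Longrightarrow> diagonal_matrix (twist s1 s2 w) \<in> SU_n1"
  by (simp add: diagonal_matrix_in_SU_n1 norm_twist prod_twist)

lemma twist_cnj_mult_twist:
  assumes "cmod w = 1"
  shows "diagonal_matrix (twist s1 s2 (cnj w)) ** diagonal_matrix (twist s1 s2 w) = mat 1"
proof -
  have "w * cnj w = 1"
    using assms complex_norm_square[of w] by simp
  then have "twist s1 s2 (cnj w) i * twist s1 s2 w i = 1" for i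
    by (simp add: twist_def power_mult_distrib[symmetric] mult.commute)
  then show ?thesis
    by (simp add: diagonal_matrix_mult mat_1_eq_diagonal_matrix)
qed

lemma trace_twist_mult:
  assumes "s1 \<noteq> s2"
  shows "trace (diagonal_matrix (twist s1 s2 w) ** X) =
    cnj w ^ 2 * X $ None $ None + w * (X $ Some s1 $ Some s1 + X $ Some s2 $ Some s2)
      + (\<Sum>i \<in> - {None, Some s1, Some s2}. X $ i $ i)"
proof -
  let ?S = "{None, Some s1, Some s2}"
  have "trace (diagonal_matrix (twist s1 s2 w) ** X) = (\<Sum>i\<in>UNIV. twist s1 s2 w i * X $ i $ i)"
    by (simp add: trace_def diagonal_matrix_mult_nth)
  also have "\<dots> = (\<Sum>i\<in>?S. twist s1 s2 w i * X $ i $ i) + (\<Sum>i\<in>-?S. twist s1 s2 w i * X $ i $ i)"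
    by (metis (no_types, lifting) Compl_eq_Diff_UNIV add.commute finite sum.subset_diff top_greatest)
  also have "(\<Sum>i\<in>-?S. twist s1 s2 w i * X $ i $ i) = (\<Sum>i\<in>-?S. X $ i $ i)"
    by (rule sum.cong) (auto simp: twist_def)
  also have "(\<Sum>i\<in>?S. twist s1 s2 w i * X $ i $ i) =
      cnj w ^ 2 * X $ None $ None + w * (X $ Some s1 $ Some s1 + X $ Some s2 $ Some s2)"
    using assms by (simp add: twist_def distrib_left)
  finally show ?thesis .
qed

lemma unit_circle_real_values_bound:
  fixes a b c :: complex
  assumes "a \<noteq> 0"
  defines "W \<equiv> {w. cmod w = 1 \<and> Im (cnj w ^ 2 * a + w * b + c) = 0}"
  shows "finite W" and "card W \<le> 4"
proof -
  \<comment> \<open>\<open>w\<^sup>2 (T - cnj T)\<close> for \<open>T = cnj w\<^sup>2 a + w b + c\<close>, using \<open>cnj w = 1 / w\<close> on the unit circle\<close>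
  define P where "P = [:a, - cnj b, c - cnj c, b, - cnj a:]"
  have "P \<noteq> 0"
    using assms(1) by (simp add: P_def)
  have root: "poly P w = 0" if "w \<in> W" for w
  proof -
    let ?T = "cnj w ^ 2 * a + w * b + c"
    have "w * cnj w = 1"
      using that complex_norm_square[of w] by (simp add: W_def)
    have "Im ?T = 0"
      using that unfolding W_def by blast
    then have "cnj ?T = ?T"
      by (metis Reals_cnj_iff complex_is_Real_iff)
    have "poly P w = w ^ 2 * (?T - cnj ?T)"
      using \<open>w * cnj w = 1\<close>
      by (simp add: P_def algebra_simps power2_eq_square power3_eq_cube power4_eq_xxxx)
    then show ?thesis
      using \<open>cnj ?T = ?T\<close> by simp
  qed
  then have "W \<subseteq> {w. poly P w = 0}"
    by blast
  then show "finite W"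
    using poly_roots_finite[OF \<open>P \<noteq> 0\<close>] by (rule finite_subset)
  have "card W \<le> card {w. poly P w = 0}"
    using poly_roots_finite[OF \<open>P \<noteq> 0\<close>] \<open>W \<subseteq> _\<close> by (rule card_mono)
  also have "\<dots> \<le> degree P"
    using card_poly_roots_bound[OF \<open>P \<noteq> 0\<close>] .
  also have "\<dots> \<le> 4"
    by (simp add: P_def)
  finally show "card W \<le> 4" .
qed

lemma twist_real_trace_bound:
  fixes X :: "complex^('m::finite option)^('m option)" and u :: "nat \<Rightarrow> complex"
  assumes "s1 \<noteq> s2" and "X $ None $ None \<noteq> 0" and "inj u" and "range u \<subseteq> sphere 0 1"
  defines "K \<equiv> {k. Im (trace (diagonal_matrix (twist s1 s2 (u k)) ** X)) = 0}"
  shows "finite K" and "card K \<le> 4"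
proof -
  define W where "W = {w. cmod w = 1 \<and> Im (cnj w ^ 2 * X $ None $ None
      + w * (X $ Some s1 $ Some s1 + X $ Some s2 $ Some s2) + (\<Sum>i \<in> - {None, Some s1, Some s2}. X $ i $ i)) = 0}"
  have "cmod (u k) = 1" for k
    using assms(4) by (simp add: image_subset_iff)
  then have "K = u -` W"
    by (simp add: K_def W_def trace_twist_mult[OF assms(1)] vimage_def)
  moreover have "finite W" and "card W \<le> 4"
    unfolding W_def by (rule unit_circle_real_values_bound[OF assms(2)])+
  ultimately show "finite K" and "card K \<le> 4"
    using finite_vimageI[OF _ assms(3)] card_vimage_inj_on_le[OF assms(3), of W] by auto
qed

lemma emeasure_eq_0_if_bounded_overlap:
  fixes A :: "nat \<Rightarrow> 'a set"
  assumes A: "\<And>k. A k \<in> sets M" and AC: "\<And>k. A k \<subseteq> C"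
    and C: "C \<in> sets M" "emeasure M C < \<infinity>"
    and e: "\<And>k. emeasure M (A k) = e"
    and overlap: "\<And>x. finite {k. x \<in> A k}" "\<And>x. card {k. x \<in> A k} \<le> m"
  shows "e = 0"
proof (rule ccontr)
  assume "e \<noteq> 0"
  have "of_nat N * e \<le> of_nat m * emeasure M C" for N
  proof -
    have "of_nat N * e = (\<integral>\<^sup>+ x. (\<Sum>k<N. indicator (A k) x) \<partial>M)"
      using A by (simp add: nn_integral_sum e)
    also have "\<dots> \<le> (\<integral>\<^sup>+ x. of_nat m * indicator C x \<partial>M)"
    proof (rule nn_integral_mono)
      fix x
      let ?K = "{..<N} \<inter> {k. x \<in> A k}"
      have "(\<Sum>k<N. indicator (A k) x :: ennreal) = of_nat (card ?K)"
        by (simp add: indicator_def sum.If_cases)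
      moreover have "card ?K \<le> m"
        using card_mono[OF overlap(1)[of x], of ?K] overlap(2)[of x] by auto
      moreover have "?K = {}" if "x \<notin> C"
        using AC that by blast
      ultimately show "(\<Sum>k<N. indicator (A k) x) \<le> (of_nat m * indicator C x :: ennreal)"
        by (cases "x \<in> C") auto
    qed
    also have "\<dots> = of_nat m * emeasure M C"
      using C(1) by (simp add: nn_integral_cmult_indicator)
    finally show ?thesis .
  qed
  then have "(SUP N. of_nat N) * e \<le> of_nat m * emeasure M C"
    unfolding SUP_mult_right_ennreal by (rule SUP_least)
  then show False
    using \<open>e \<noteq> 0\<close> C(2) by (simp add: ennreal_SUP_of_nat_eq_top top_unique ennreal_mult_eq_top_iff)
qed

lemma emeasure_closed_eq_0_if_compact_null:
  fixes F :: "'a::euclidean_space set"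
  assumes "sets M = sets borel" and "closed F"
    and "\<And>K. compact K \<Longrightarrow> K \<subseteq> F \<Longrightarrow> emeasure M K = 0"
  shows "emeasure M F = 0"
proof -
  have "F = (\<Union>j::nat. F \<inter> cball 0 (real j))"
    using real_arch_simple by auto
  moreover have "compact (F \<inter> cball 0 (real j))" for j
    using assms(2) by (simp add: closed_Int_compact)
  ultimately show ?thesis
    using assms by (metis (no_types, lifting) emeasure_UN_eq_0 borel_compact image_subset_iff inf_le1)
qed

lemma continuous_on_pair_mult:
  "continuous_on S (pair_mult (g :: (complex^'n::finite^'n) \<times> (complex^'n^'n)))"
  unfolding pair_mult_def[abs_def] matrix_matrix_mult_def
  by (intro continuous_intros)

lemma unit_circle_sequence:
  obtains u :: "nat \<Rightarrow> complex" where "inj u" and "range u \<subseteq> sphere 0 1"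
proof -
  have "uncountable (sphere (0::complex) 1)"
    by (rule connected_uncountable[of _ 1 "-1"]) (auto intro: connected_sphere)
  then show ?thesis
    using that infinite_countable_subset countable_finite by blast
qed

lemma norm_pair_mult_twist:
  assumes "cmod w = 1"
  shows "norm (pair_mult (diagonal_matrix (twist s1 s2 w), mat 1) p) = norm p"
  using assms by (cases p) (simp add: pair_mult_def norm_Pair norm_diagonal_matrix_mult norm_twist)

lemma pair_mult_twist_cnj_inverse:
  assumes "cmod w = 1" and "x \<in> pair_mult (diagonal_matrix (twist s1 s2 (cnj w)), mat 1) ` B"
  shows "(diagonal_matrix (twist s1 s2 w) ** fst x, snd x) \<in> B"
proof -
  have "cmod (cnj w) = 1" and "cnj (cnj w) = w"
    using assms(1) by simp_all
  then show ?thesis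
    using assms(2) twist_cnj_mult_twist[of "cnj w" s1 s2]
    by (auto simp: pair_mult_def matrix_mul_assoc)
qed

lemma haar_SU_n1_compact_real_trace_null:
  fixes \<mu> :: "((complex^('m::finite option)^('m option)) \<times> (complex^('m option)^('m option))) measure"
  assumes "CARD('m) \<ge> 2" and haar: "haar_measure pair_mult (SU_n1 \<times> SU_n1) \<mu>"
    and B: "compact B" "B \<subseteq> SU_n1 \<times> SU_n1" "\<And>p. p \<in> B \<Longrightarrow> Im (trace (fst p)) = 0"
  shows "emeasure \<mu> B = 0"
proof -
  have sets: "sets \<mu> = sets borel"
    using haar by (simp add: haar_measure_def)
  have "\<not> card (UNIV :: 'm set) \<le> Suc 0"
    using assms(1) by simp
  then obtain s1 s2 :: 'm where "s1 \<noteq> s2"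
    using card_le_Suc0_iff_eq[of "UNIV :: 'm set"] by auto
  obtain u :: "nat \<Rightarrow> complex" where "inj u" and "range u \<subseteq> sphere 0 1"
    by (rule unit_circle_sequence)
  then have u: "cmod (u k) = 1" "cmod (cnj (u k)) = 1" for k
    by (auto simp: image_subset_iff)
  obtain r where "\<forall>p\<in>B. norm p \<le> r"
    using compact_imp_bounded[OF B(1)] unfolding bounded_iff by blast
  then have r: "B \<subseteq> cball 0 r"
    by auto
  define A where "A k = pair_mult (diagonal_matrix (twist s1 s2 (cnj (u k))), mat 1) ` B" for k
  show ?thesis
  proof (rule emeasure_eq_0_if_bounded_overlap[of A \<mu> "cball 0 r" _ 4])
    show "A k \<in> sets \<mu>" for k
      unfolding A_def sets
      by (intro borel_compact compact_continuous_image continuous_on_pair_mult B(1))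
    show "emeasure \<mu> (A k) = emeasure \<mu> B" for k
    proof -
      have "(diagonal_matrix (twist s1 s2 (cnj (u k))), mat 1) \<in> SU_n1 \<times> SU_n1"
        using twist_in_SU_n1[OF \<open>s1 \<noteq> s2\<close> u(2)] mat_1_in_SU_n1 by simp
      then show ?thesis
        using haar B(2) borel_compact[OF B(1)] unfolding A_def haar_measure_def by blast
    qed
    show "A k \<subseteq> cball 0 r" for k
      using r u by (auto simp: A_def norm_pair_mult_twist)
    show "cball 0 r \<in> sets \<mu>" and "emeasure \<mu> (cball 0 r) < \<infinity>"
      using haar by (simp_all add: sets haar_measure_def)
    fix x
    have untwisted: "(diagonal_matrix (twist s1 s2 (u k)) ** fst x, snd x) \<in> B" if "x \<in> A k" for k
      using pair_mult_twist_cnj_inverse[OF u(1)] that by (simp add: A_def)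
    let ?K = "{k. Im (trace (diagonal_matrix (twist s1 s2 (u k)) ** fst x)) = 0}"
    have sub: "{k. x \<in> A k} \<subseteq> ?K"
      using B(3)[OF untwisted] by auto
    show "finite {k. x \<in> A k}" and "card {k. x \<in> A k} \<le> 4"
    proof (atomize (full), cases "\<exists>k. x \<in> A k")
      case True
      then obtain k where "x \<in> A k"
        by blast
      then have "diagonal_matrix (twist s1 s2 (u k)) ** fst x \<in> SU_n1"
        using B(2) untwisted by blast
      then have "fst x $ None $ None \<noteq> 0"
        using SU_n1_nth_None_None_nonzero by (fastforce simp: diagonal_matrix_mult_nth)
      then have "finite ?K" and "card ?K \<le> 4"
        using twist_real_trace_bound[OF \<open>s1 \<noteq> s2\<close> _ \<open>inj u\<close> \<open>range u \<subseteq> _\<close>] by blast+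
      then show "finite {k. x \<in> A k} \<and> card {k. x \<in> A k} \<le> 4"
        using sub card_mono[of ?K "{k. x \<in> A k}"] finite_subset[OF sub] by linarith
    qed simp
  qed
qed

theorem corollary4p3:
  fixes \<mu> :: "((complex^('m::finite option)^('m option)) \<times> (complex^('m option)^('m option))) measure"
  assumes "CARD('m) \<ge> 2"
    and "haar_measure pair_mult (SU_n1 \<times> SU_n1) \<mu>"
  shows "haar_null \<mu> {(g1, g2). g1 \<in> SU_n1 \<and> g2 \<in> SU_n1 \<and>
                                 strongly_doubly_reversible SU_n1 g1 g2}"
proof -
  let ?Q = "(SU_n1 \<times> SU_n1) \<inter> {p. Im (trace (fst p)) = 0} ::
    ((complex^('m option)^('m option)) \<times> (complex^('m option)^('m option))) set"
  have sets: "sets \<mu> = sets borel"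
    using assms(2) by (simp add: haar_measure_def)
  have "closed ?Q"
    unfolding trace_def
    by (intro closed_Int closed_Times closed_SU_n1 closed_Collect_eq continuous_intros)
  then have "?Q \<in> sets \<mu>"
    unfolding sets by (rule borel_closed)
  moreover have "emeasure \<mu> ?Q = 0"
  proof (rule emeasure_closed_eq_0_if_compact_null[OF sets \<open>closed ?Q\<close>])
    fix K
    assume "compact K" and "K \<subseteq> ?Q"
    then show "emeasure \<mu> K = 0"
      by (intro haar_SU_n1_compact_real_trace_null[OF assms]) blast+
  qed
  moreover have "{(g1, g2). g1 \<in> SU_n1 \<and> g2 \<in> SU_n1 \<and> strongly_doubly_reversible SU_n1 g1 g2} \<subseteq> ?Q"
    using strongly_doubly_reversible_trace_real by auto
  ultimately show ?thesis
    unfolding haar_null_def by blast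
qed

end
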